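(* Let $\mathcal{F}$ be a hypothesis class of functions $\mathcal{X}\to\{\pm1\}$ with finite VC dimension $d$, and $\mathcal{P}$ an unknown distribution on $\mathcal{X}\times\{\pm1\}$. Consider a run of Active-ILESS with accuracy parameter $\epsilon>0$ and confidence $\delta$, suppose the event $\mathcal{K}$ occurred, and suppose the run terminated because of the $\epsilon$ condition. Then the returned hypothesis $\hat f$ satisfies $R_{\mathcal{P}}(\hat f)\le R_{\mathcal{P}}(f^* )+\epsilon$, where $f^*$ is a true risk minimizer of $\mathcal{P}$.
   Context: $R_{\mathcal{P}}(f)=\Pr_{\mathcal{P}}[f(X)\ne Y]$; $\hat R(f,S)$ is the fraction of examples of $S$ misclassified by $f$; $f^*$ is any minimizer of $R_{\mathcal P}$ over $\mathcal{F}$. Slacks: for $n>0$, $\delta'\in(0,1)$, $A=4d\ln\frac{16ne}{d\delta'}$, $\hat\sigma_{R-\hat R}(n,\delta',d,\hat r)=\frac{A}{n}+\sqrt{\frac{A}{n}\hat r}$, $\bar\sigma_{R-\hat R}(n,\delta',d,r)=\sqrt{\frac{A}{n}r}$, $\bar\sigma_{\hat R-R}(n,\delta',d,r)=\frac{A}{n}+\sqrt{\frac{A}{n}r}$, $\hat\sigma_{\hat R-R}(n,\delta',d,\hat r)=\sqrt{\frac{A}{n}\hat r}$, $\sigma_{R-\hat R}=\min\{\hat\sigma_{R-\hat R}(\cdot,\hat r),\bar\sigma_{R-\hat R}(\cdot,r)\}$, $\sigma_{\hat R-R}=\min\{\bar\sigma_{\hat R-R}(\cdot,r),\hat\sigma_{\hat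 R-R}(\cdot,\hat r)\}$. $AGR(G)=\{x:\text{all }f\in G\text{ agree on }x\}$. Active-ILESS (inputs: $\epsilon$ and/or budget $m$, confidence $\delta$, $\mathcal{F}$, $d$, i.i.d. stream $x_1,x_2,\dots$ from $\mathcal{P}$): initialize $\hat S=\emptyset$, $G_0=\mathcal{F}$, $t=1$; for each $x_t$: if $x_t\in AGR(G_{t-1})$ do not request its label and set $y_t=f(x_t)$ for any $f\in G_{t-1}$, otherwise request the true label $y_t$; add $(x_t,y_t)$ to $\hat S$; let $\hat f$ be an ERM on $\hat S$; if $\log_2t\in\mathbb{N}$: set $\sigma_{\rm Active}=\hat\sigma_{R-\hat R}(\tfrac t2,\tfrac\delta{2t},d,\hat R(\hat f,\hat S))+\bar\sigma_{\hat R-R}\big(\tfrac t2,\tfrac\delta{2t},d,\hat R(\hat f,\hat S)+\hat\sigma_{R-\hat R}(\tfrac t2,\tfrac\delta{2t},d,\hat R(\hat f,\hat S))\big)$, terminate returning $\hat f$ if $\epsilon$ was given and $\sigma_{\rm Active}<\epsilon$ (the "$\epsilon$ condition"), set $G_t=\{f:\hat R(f,\hat S)\le\hat R(\hat f,\hat S)+\sigma_{\rm Active}\}$ and reset $\hat S=\emptyset$; otherwise $G_t=G_{t-1}$; if $m$ was given and $t=m$ terminate returning $\hat f$; increment $t$. For $G\subseteq\mathcal{F}$, $\mathcal{P}(G)$ is the distribution of $(X,Y')$ with $(X,Y)\sim\mathcal{P}$, $Y'$ = common value of $G$ at $X$ if $X\in AGR(G)$ and $Y'=Y$ otherwise; $R_{\mathcal{P}(G)}(f)=\Pr[f(X)\ne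 Y']$. Event $\mathcal{K}$: for every $t=2^i$ reached and every $f\in\mathcal{F}$, with $\hat R(f)=\hat R(f,\hat S)$ for $\hat S$ at iteration $t$ before reset, $R_{\mathcal{P}(G_{t-1})}(f)\le\hat R(f)+\sigma_{R-\hat R}(\tfrac t2,\tfrac\delta{2t},d,R_{\mathcal{P}(G_{t-1})}(f),\hat R(f))$ and $\hat R(f)\le R_{\mathcal{P}(G_{t-1})}(f)+\sigma_{\hat R-R}(\tfrac t2,\tfrac\delta{2t},d,R_{\mathcal{P}(G_{t-1})}(f),\hat R(f))$. *)

theory Defs
  imports "HOL-Probability.Probability_Measure"
begin

(* Labels {+1,-1} are represented by bool (True = +1, False = -1). *)

definition shatters :: "('a \<Rightarrow> bool) set \<Rightarrow> 'a set \<Rightarrow> bool" where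
  "shatters F C \<longleftrightarrow> (\<forall>B \<subseteq> C. \<exists>f\<in>F. \<forall>x\<in>C. f x = (x \<in> B))"

definition VC_dim :: "('a \<Rightarrow> bool) set \<Rightarrow> nat \<Rightarrow> bool" where
  "VC_dim F d \<longleftrightarrow>
     (\<exists>C. finite C \<and> card C = d \<and> shatters F C) \<and>
     (\<forall>C. finite C \<and> shatters F C \<longrightarrow> card C \<le> d)"

definition AGR :: "('a \<Rightarrow> bool) set \<Rightarrow> 'a set" where
  "AGR G = {x. \<forall>f\<in>G. \<forall>g\<in>G. f x = g x}"

text \<open>The label Y' of the distribution P(G): common value of G on AGR(G), true label otherwise.\<close>
definition relab :: "('a \<Rightarrow> bool) set \<Rightarrow> 'a \<Rightarrow> bool \<Rightarrow> bool" where
  "relab G x y = (if x \<in> AGR G then (SOME f. f \<in> G) x else y)"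

definition risk :: "('a \<times> bool) measure \<Rightarrow> ('a \<Rightarrow> bool) \<Rightarrow> real" where
  "risk M f = measure M {p \<in> space M. f (fst p) \<noteq> snd p}"

definition risk_rel :: "('a \<times> bool) measure \<Rightarrow> ('a \<Rightarrow> bool) set \<Rightarrow> ('a \<Rightarrow> bool) \<Rightarrow> real" where
  "risk_rel M G f = measure M {p \<in> space M. f (fst p) \<noteq> relab G (fst p) (snd p)}"

definition emp_err :: "('a \<Rightarrow> bool) \<Rightarrow> ('a \<times> bool) list \<Rightarrow> real" where
  "emp_err f S = real (length (filter (\<lambda>p. f (fst p) \<noteq> snd p) S)) / real (length S)"

definition is_ERM :: "('a \<Rightarrow> bool) set \<Rightarrow> ('a \<times> bool) list \<Rightarrow> ('a \<Rightarrow> bool) \<Rightarrow> bool" where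
  "is_ERM F S f \<longleftrightarrow> f \<in> F \<and> (\<forall>g\<in>F. emp_err f S \<le> emp_err g S)"

definition slackA :: "real \<Rightarrow> real \<Rightarrow> nat \<Rightarrow> real" where
  "slackA n \<delta>' d = 4 * real d * ln (16 * n * exp 1 / (real d * \<delta>'))"

definition sig_hat_RmR :: "real \<Rightarrow> real \<Rightarrow> nat \<Rightarrow> real \<Rightarrow> real" where
  "sig_hat_RmR n \<delta>' d rh = slackA n \<delta>' d / n + sqrt (slackA n \<delta>' d / n * rh)"

definition sig_bar_RmR :: "real \<Rightarrow> real \<Rightarrow> nat \<Rightarrow> real \<Rightarrow> real" where
  "sig_bar_RmR n \<delta>' d r = sqrt (slackA n \<delta>' d / n * r)"

definition sig_bar_RhmR :: "real \<Rightarrow> real \<Rightarrow> nat \<Rightarrow> real \<Rightarrow> real" where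
  "sig_bar_RhmR n \<delta>' d r = slackA n \<delta>' d / n + sqrt (slackA n \<delta>' d / n * r)"

definition sig_hat_RhmR :: "real \<Rightarrow> real \<Rightarrow> nat \<Rightarrow> real \<Rightarrow> real" where
  "sig_hat_RhmR n \<delta>' d rh = sqrt (slackA n \<delta>' d / n * rh)"

definition sig_RmR :: "real \<Rightarrow> real \<Rightarrow> nat \<Rightarrow> real \<Rightarrow> real \<Rightarrow> real" where
  "sig_RmR n \<delta>' d r rh = min (sig_hat_RmR n \<delta>' d rh) (sig_bar_RmR n \<delta>' d r)"

definition sig_RhmR :: "real \<Rightarrow> real \<Rightarrow> nat \<Rightarrow> real \<Rightarrow> real \<Rightarrow> real" where
  "sig_RhmR n \<delta>' d r rh = min (sig_bar_RhmR n \<delta>' d r) (sig_hat_RhmR n \<delta>' d rh)"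

definition sigma_active :: "nat \<Rightarrow> real \<Rightarrow> nat \<Rightarrow> real \<Rightarrow> real" where
  "sigma_active t \<delta> d rh =
     (let n = real t / 2; \<delta>' = \<delta> / (2 * real t)
      in sig_hat_RmR n \<delta>' d rh + sig_bar_RhmR n \<delta>' d (rh + sig_hat_RmR n \<delta>' d rh))"

definition is_pow2 :: "nat \<Rightarrow> bool" where
  "is_pow2 t \<longleftrightarrow> (\<exists>i. t = 2 ^ i)"

text \<open>A run is determined by the realised stream xs t, the true labels ys t (t \<ge> 1), and the
  ERM selected at iteration t, given as sel t S' for the current sample S'.
  iless_state ... t = (G_t, Shat after iteration t).\<close>

primrec iless_state ::
  "('a \<Rightarrow> bool) set \<Rightarrow> nat \<Rightarrow> real \<Rightarrow> (nat \<Rightarrow> ('a \<times> bool) list \<Rightarrow> ('a \<Rightarrow> bool)) \<Rightarrow>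
   (nat \<Rightarrow> 'a) \<Rightarrow> (nat \<Rightarrow> bool) \<Rightarrow> nat \<Rightarrow> ('a \<Rightarrow> bool) set \<times> ('a \<times> bool) list" where
  "iless_state F d \<delta> sel xs ys 0 = (F, [])"
| "iless_state F d \<delta> sel xs ys (Suc k) =
     (let G = fst (iless_state F d \<delta> sel xs ys k);
          S' = snd (iless_state F d \<delta> sel xs ys k) @ [(xs (Suc k), relab G (xs (Suc k)) (ys (Suc k)))];
          fh = sel (Suc k) S'
      in if is_pow2 (Suc k)
         then ({f \<in> F. emp_err f S' \<le> emp_err fh S' + sigma_active (Suc k) \<delta> d (emp_err fh S')}, [])
         else (G, S'))"

definition iless_G where
  "iless_G F d \<delta> sel xs ys t = fst (iless_state F d \<delta> sel xs ys t)"

text \<open>The sample Shat at iteration t (t \<ge> 1), after adding (x_t,y_t) and before any reset.\<close>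
definition iless_sample where
  "iless_sample F d \<delta> sel xs ys t =
     snd (iless_state F d \<delta> sel xs ys (t - 1)) @
       [(xs t, relab (iless_G F d \<delta> sel xs ys (t - 1)) (xs t) (ys t))]"

definition iless_fhat where
  "iless_fhat F d \<delta> sel xs ys t = sel t (iless_sample F d \<delta> sel xs ys t)"

definition eps_cond where
  "eps_cond \<epsilon> F d \<delta> sel xs ys t \<longleftrightarrow> is_pow2 t \<and>
     sigma_active t \<delta> d (emp_err (iless_fhat F d \<delta> sel xs ys t) (iless_sample F d \<delta> sel xs ys t)) < \<epsilon>"

definition event_K where
  "event_K M F d \<delta> sel xs ys T \<longleftrightarrow>
     (\<forall>t. 1 \<le> t \<and> t \<le> T \<and> is_pow2 t \<longrightarrow>
        (\<forall>f\<in>F.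
          let r = risk_rel M (iless_G F d \<delta> sel xs ys (t - 1)) f;
              rh = emp_err f (iless_sample F d \<delta> sel xs ys t);
              n = real t / 2; \<delta>' = \<delta> / (2 * real t)
          in r \<le> rh + sig_RmR n \<delta>' d r rh \<and> rh \<le> r + sig_RhmR n \<delta>' d r rh))"

end

theory Submission
  imports Defs
begin

text \<open>Write \<open>a = A/n\<close>. Both inequalities of event K have the form \<open>x \<le> conf_upper a y\<close>,
  and \<open>rh + \<sigma>_Active(rh) = conf_upper a (conf_upper a rh)\<close>. Relabelling by the version
  space \<open>G\<close> changes labels only where all of \<open>G\<close> agree, so for \<open>f* \<in> G\<close> the excess risk
  of any \<open>f\<close> under \<open>P\<close> is at most its excess risk under \<open>P(G)\<close>. Chaining the two confidence
  bounds through \<open>f*\<close> shows that \<open>f*\<close> survives every elimination step, and that at every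
  dyadic iteration the excess risk of the ERM is at most \<open>\<sigma>_Active\<close>; at termination
  this is below \<open>\<epsilon>\<close>.\<close>

definition conf_upper :: "real \<Rightarrow> real \<Rightarrow> real" where
  "conf_upper a x = x + a + sqrt (a * x)"

definition slack_rate :: "nat \<Rightarrow> real \<Rightarrow> nat \<Rightarrow> real" where
  "slack_rate t \<delta> d = slackA (real t / 2) (\<delta> / (2 * real t)) d / (real t / 2)"

lemma conf_upper_mono:
  assumes "0 \<le> a" "x \<le> y"
  shows "conf_upper a x \<le> conf_upper a y"
proof -
  have "sqrt (a * x) \<le> sqrt (a * y)"
    using assms by (simp add: mult_left_mono)
  with assms(2) show ?thesis unfolding conf_upper_def by linarith
qed

text \<open>The constant \<open>A = 4d ln(16ne/(d\<delta>'))\<close> is not a priori nonnegative; two-sided bounds force it.\<close>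

lemma conf_upper_two_sided_imp_nonneg:
  assumes "r \<le> conf_upper a s" "s \<le> conf_upper a r" "0 \<le> r" "0 \<le> s"
  shows "0 \<le> a"
proof (rule ccontr)
  assume "\<not> 0 \<le> a"
  then have "sqrt (a * r) \<le> 0" "sqrt (a * s) \<le> 0"
    using assms(3,4) by (simp_all add: mult_nonpos_nonneg)
  with assms(1,2) \<open>\<not> 0 \<le> a\<close> show False
    unfolding conf_upper_def by linarith
qed

lemma slack_bounds_imp_conf_upper:
  assumes "r \<le> rh + sig_RmR n \<delta>' d r rh" "rh \<le> r + sig_RhmR n \<delta>' d r rh" "0 \<le> r" "0 \<le> rh"
  shows "0 \<le> slackA n \<delta>' d / n"
    and "r \<le> conf_upper (slackA n \<delta>' d / n) rh"
    and "rh \<le> conf_upper (slackA n \<delta>' d / n) r"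
proof -
  show r: "r \<le> conf_upper (slackA n \<delta>' d / n) rh"
    using assms(1) unfolding sig_RmR_def sig_hat_RmR_def conf_upper_def by linarith
  show rh: "rh \<le> conf_upper (slackA n \<delta>' d / n) r"
    using assms(2) unfolding sig_RhmR_def sig_bar_RhmR_def conf_upper_def by linarith
  show "0 \<le> slackA n \<delta>' d / n"
    using conf_upper_two_sided_imp_nonneg[OF r rh assms(3,4)] .
qed

lemma sigma_active_conf_upper:
  "rh + sigma_active t \<delta> d rh = conf_upper (slack_rate t \<delta> d) (conf_upper (slack_rate t \<delta> d) rh)"
  unfolding sigma_active_def sig_hat_RmR_def sig_bar_RhmR_def conf_upper_def slack_rate_def Let_def
  by simp

lemma conf_upper_chain:
  assumes "0 \<le> a" "r' \<le> r" "r \<le> conf_upper a rh" "rh' \<le> conf_upper a r'"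
  shows "rh' \<le> conf_upper a (conf_upper a rh)"
  using assms order_trans conf_upper_mono by meson

lemma conf_upper_excess:
  assumes "0 \<le> a" "rh \<le> rh'" "r \<le> conf_upper a rh" "rh' \<le> conf_upper a r'" "0 \<le> rh"
  shows "r - r' \<le> conf_upper a (conf_upper a rh) - rh"
proof (cases "r' \<le> conf_upper a rh")
  case True
  then have "conf_upper a r' \<le> r' + a + sqrt (a * conf_upper a rh)"
    using assms(1) by (simp add: conf_upper_def mult_left_mono)
  with assms(2-4) show ?thesis
    unfolding conf_upper_def by linarith
next
  case False
  have "0 \<le> sqrt (a * rh)" "0 \<le> sqrt (a * conf_upper a rh)"
    using assms(1,5) by (simp_all add: conf_upper_def)
  with False assms(1,3) show ?thesis
    unfolding conf_upper_def by linarith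
qed

lemma emp_err_nonneg: "0 \<le> emp_err f S"
  unfolding emp_err_def by simp

lemma relab_in_AGR:
  assumes "g \<in> G" "x \<in> AGR G"
  shows "relab G x y = g x"
proof -
  define h where "h = (SOME f. f \<in> G)"
  have "h \<in> G" unfolding h_def using assms(1) by (rule someI[where P = "\<lambda>f. f \<in> G"])
  moreover have "\<forall>f\<in>G. \<forall>f'\<in>G. f x = f' x" using assms(2) by (simp add: AGR_def)
  ultimately have "h x = g x" using assms(1) by blast
  with assms(2) show ?thesis by (simp add: relab_def h_def)
qed

lemma risk_sub_le_risk_rel_sub:
  assumes "prob_space M" "g \<in> G"
    and "{p \<in> space M. f (fst p) \<noteq> snd p} \<in> sets M"
    and "{p \<in> space M. g (fst p) \<noteq> snd p} \<in> sets M"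
    and "{p \<in> space M. f (fst p) \<noteq> relab G (fst p) (snd p)} \<in> sets M"
    and "{p \<in> space M. g (fst p) \<noteq> relab G (fst p) (snd p)} \<in> sets M"
  shows "risk M f - risk M g \<le> risk_rel M G f - risk_rel M G g"
proof -
  interpret prob_space M by fact
  define A where "A = {p \<in> space M. f (fst p) \<noteq> snd p}"
  define B where "B = {p \<in> space M. g (fst p) \<noteq> snd p}"
  define C where "C = {p \<in> space M. f (fst p) \<noteq> relab G (fst p) (snd p)}"
  define D where "D = {p \<in> space M. g (fst p) \<noteq> relab G (fst p) (snd p)}"
  have sets: "A \<in> sets M" "B \<in> sets M" "C \<in> sets M" "D \<in> sets M"
    using assms(3-6) by (simp_all add: A_def B_def C_def D_def)
  have pointwise: "indicator A p + indicator D p \<le> (indicator C p + indicator B p :: real)" for p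
  proof (cases "fst p \<in> AGR G")
    case True
    then have "relab G (fst p) (snd p) = g (fst p)" by (rule relab_in_AGR[OF assms(2)])
    then have "p \<notin> D" "p \<in> A \<Longrightarrow> p \<in> C \<or> p \<in> B"
      unfolding A_def B_def C_def D_def by auto
    then show ?thesis by (auto simp: indicator_def)
  next
    case False
    then have "p \<in> A \<longleftrightarrow> p \<in> C" "p \<in> D \<longleftrightarrow> p \<in> B"
      unfolding A_def B_def C_def D_def relab_def by auto
    then show ?thesis by (simp add: indicator_def)
  qed
  have integrable: "integrable M (indicator X :: _ \<Rightarrow> real)" if "X \<in> sets M" for X
    using that by (simp add: integrable_indicator_iff emeasure_eq_measure)
  have "integral\<^sup>L M (\<lambda>p. indicator A p + indicator D p :: real)
        \<le> integral\<^sup>L M (\<lambda>p. indicator C p + indicator B p :: real)"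
    by (rule integral_mono) (use pointwise integrable sets in auto)
  then have "measure M A + measure M D \<le> measure M C + measure M B"
    using sets integrable by (simp add: Bochner_Integration.integral_add)
  then show ?thesis unfolding risk_def risk_rel_def A_def B_def C_def D_def by linarith
qed

lemma iless_G_0: "iless_G F d \<delta> sel xs ys 0 = F"
  by (simp add: iless_G_def)

lemma iless_G_Suc:
  "iless_G F d \<delta> sel xs ys (Suc k) =
     (if is_pow2 (Suc k)
      then {f \<in> F. emp_err f (iless_sample F d \<delta> sel xs ys (Suc k))
              \<le> emp_err (iless_fhat F d \<delta> sel xs ys (Suc k)) (iless_sample F d \<delta> sel xs ys (Suc k))
                + sigma_active (Suc k) \<delta> d
                    (emp_err (iless_fhat F d \<delta> sel xs ys (Suc k)) (iless_sample F d \<delta> sel xs ys (Suc k)))}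
      else iless_G F d \<delta> sel xs ys k)"
  by (simp add: iless_G_def iless_fhat_def iless_sample_def Let_def)

locale active_iless_run =
  fixes M :: "('a \<times> bool) measure" and F :: "('a \<Rightarrow> bool) set" and d :: nat and \<delta> :: real
    and sel :: "nat \<Rightarrow> ('a \<times> bool) list \<Rightarrow> ('a \<Rightarrow> bool)"
    and xs :: "nat \<Rightarrow> 'a" and ys :: "nat \<Rightarrow> bool" and T :: nat and fstar :: "'a \<Rightarrow> bool"
  assumes prob: "prob_space M"
    and err_sets: "\<And>f. f \<in> F \<Longrightarrow> {p \<in> space M. f (fst p) \<noteq> snd p} \<in> sets M"
    and rel_err_sets: "\<And>t f. 1 \<le> t \<Longrightarrow> t \<le> T \<Longrightarrow> f \<in> F \<Longrightarrow>
           {p \<in> space M. f (fst p) \<noteq> relab (iless_G F d \<delta> sel xs ys (t - 1)) (fst p) (snd p)} \<in> sets M"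
    and ERM: "\<And>t. 1 \<le> t \<Longrightarrow> t \<le> T \<Longrightarrow>
           is_ERM F (iless_sample F d \<delta> sel xs ys t) (iless_fhat F d \<delta> sel xs ys t)"
    and K: "event_K M F d \<delta> sel xs ys T"
    and fstar_in: "fstar \<in> F"
    and fstar_min: "\<And>f. f \<in> F \<Longrightarrow> risk M fstar \<le> risk M f"
begin

abbreviation "G \<equiv> iless_G F d \<delta> sel xs ys"
abbreviation "S \<equiv> iless_sample F d \<delta> sel xs ys"
abbreviation "fhat \<equiv> iless_fhat F d \<delta> sel xs ys"
abbreviation "R t \<equiv> risk_rel M (G (t - 1))"
abbreviation "a t \<equiv> slack_rate t \<delta> d"

lemma fhat_in: "1 \<le> t \<Longrightarrow> t \<le> T \<Longrightarrow> fhat t \<in> F"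
  using ERM by (simp add: is_ERM_def)

lemma fhat_min: "1 \<le> t \<Longrightarrow> t \<le> T \<Longrightarrow> f \<in> F \<Longrightarrow> emp_err (fhat t) (S t) \<le> emp_err f (S t)"
  using ERM by (simp add: is_ERM_def)

lemma K_bounds:
  assumes "1 \<le> t" "t \<le> T" "is_pow2 t" "f \<in> F"
  shows "0 \<le> a t" "R t f \<le> conf_upper (a t) (emp_err f (S t))"
    "emp_err f (S t) \<le> conf_upper (a t) (R t f)"
proof -
  have "R t f \<le> emp_err f (S t) + sig_RmR (real t / 2) (\<delta> / (2 * real t)) d (R t f) (emp_err f (S t))"
    "emp_err f (S t) \<le> R t f + sig_RhmR (real t / 2) (\<delta> / (2 * real t)) d (R t f) (emp_err f (S t))"
    using K assms unfolding event_K_def Let_def by blast+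
  from slack_bounds_imp_conf_upper[OF this _ emp_err_nonneg]
  show "0 \<le> a t" "R t f \<le> conf_upper (a t) (emp_err f (S t))"
    "emp_err f (S t) \<le> conf_upper (a t) (R t f)"
    unfolding slack_rate_def by (simp_all add: risk_rel_def)
qed

lemma excess_risk_le_excess_rel:
  assumes "1 \<le> t" "t \<le> T" "f \<in> F" "fstar \<in> G (t - 1)"
  shows "risk M f - risk M fstar \<le> R t f - R t fstar"
  using assms fstar_in by (intro risk_sub_le_risk_rel_sub prob err_sets rel_err_sets) auto

lemma fstar_in_G: "k < T \<Longrightarrow> fstar \<in> G k"
proof (induction k)
  case 0
  show ?case using fstar_in by (simp add: iless_G_0)
next
  case (Suc k)
  then have t: "1 \<le> Suc k" "Suc k \<le> T" and IH: "fstar \<in> G k" by simp_all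
  show ?case
  proof (cases "is_pow2 (Suc k)")
    case True
    let ?r = "emp_err (fhat (Suc k)) (S (Suc k))"
    note Kf = K_bounds[OF t True fhat_in[OF t]] and Ks = K_bounds[OF t True fstar_in]
    have "R (Suc k) fstar \<le> R (Suc k) (fhat (Suc k))"
      using excess_risk_le_excess_rel[OF t fhat_in[OF t]] IH fstar_min[OF fhat_in[OF t]] by simp
    from conf_upper_chain[OF Kf(1) this Kf(2) Ks(3)]
    have "emp_err fstar (S (Suc k)) \<le> ?r + sigma_active (Suc k) \<delta> d ?r"
      by (simp only: sigma_active_conf_upper)
    with True show ?thesis by (simp add: iless_G_Suc fstar_in)
  next
    case False
    with IH show ?thesis by (simp add: iless_G_Suc)
  qed
qed

lemma excess_risk_le_sigma_active:
  assumes "1 \<le> t" "t \<le> T" "is_pow2 t"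
  shows "risk M (fhat t) - risk M fstar \<le> sigma_active t \<delta> d (emp_err (fhat t) (S t))"
proof -
  note Kf = K_bounds[OF assms fhat_in[OF assms(1,2)]] and Ks = K_bounds[OF assms fstar_in]
  have "risk M (fhat t) - risk M fstar \<le> R t (fhat t) - R t fstar"
    using assms by (intro excess_risk_le_excess_rel fhat_in fstar_in_G) auto
  also have "\<dots> \<le> sigma_active t \<delta> d (emp_err (fhat t) (S t))"
    using conf_upper_excess[OF Kf(1) fhat_min[OF assms(1,2) fstar_in] Kf(2) Ks(3) emp_err_nonneg]
    by (simp add: sigma_active_conf_upper[symmetric])
  finally show ?thesis .
qed

end

theorem lemma12:
  fixes M :: "('a \<times> bool) measure" and F :: "('a \<Rightarrow> bool) set" and d :: nat
    and \<epsilon> \<delta> :: real and sel :: "nat \<Rightarrow> ('a \<times> bool) list \<Rightarrow> ('a \<Rightarrow> bool)"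
    and xs :: "nat \<Rightarrow> 'a" and ys :: "nat \<Rightarrow> bool" and T :: nat and fstar :: "'a \<Rightarrow> bool"
  assumes "prob_space M"
    and "VC_dim F d"
    and "\<forall>f\<in>F. {p \<in> space M. f (fst p) \<noteq> snd p} \<in> sets M"
    and "\<forall>t. 1 \<le> t \<and> t \<le> T \<longrightarrow> (\<forall>f\<in>F.
           {p \<in> space M. f (fst p) \<noteq> relab (iless_G F d \<delta> sel xs ys (t - 1)) (fst p) (snd p)} \<in> sets M)"
    and "\<epsilon> > 0" and "0 < \<delta>" and "\<delta> < 1"
    and "\<forall>t. 1 \<le> t \<and> t \<le> T \<longrightarrow>
           is_ERM F (iless_sample F d \<delta> sel xs ys t) (iless_fhat F d \<delta> sel xs ys t)"
    and "1 \<le> T"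
    and "eps_cond \<epsilon> F d \<delta> sel xs ys T"
    and "\<forall>t. 1 \<le> t \<and> t < T \<longrightarrow> \<not> eps_cond \<epsilon> F d \<delta> sel xs ys t"
    and "event_K M F d \<delta> sel xs ys T"
    and "fstar \<in> F" and "\<forall>f\<in>F. risk M fstar \<le> risk M f"
  shows "risk M (iless_fhat F d \<delta> sel xs ys T) \<le> risk M fstar + \<epsilon>"
proof -
  interpret active_iless_run M F d \<delta> sel xs ys T fstar
    using assms(1,3,4,8,12-14) by (simp add: active_iless_run_def)
  have "is_pow2 T" and "sigma_active T \<delta> d (emp_err (fhat T) (S T)) < \<epsilon>"
    using \<open>eps_cond \<epsilon> F d \<delta> sel xs ys T\<close> by (simp_all add: eps_cond_def)
  with excess_risk_le_sigma_active[OF \<open>1 \<le> T\<close> order_refl \<open>is_pow2 T\<close>] show ?thesis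
    by linarith
qed

end
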